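(* Let $I=(N,O,\succsim)$ be a general instance. If a generalized random matching $p$ is non-wasteful, then in each of its decompositions all generalized deterministic matchings are non-wasteful.
   Context: $N$ is a finite set of $n$ agents and $O$ a finite set of $m$ objects ($m,n$ arbitrary); $\emptyset$ is the null object. Each agent $i$ has a weak order $\succsim_i$ over $O\cup\{\emptyset\}$ and each object $o$ a weak order $\succsim_o$ over $N\cup\{\emptyset\}$, with no object indifferent to $\emptyset$ for any agent and vice versa. $(i,o)$ is an acceptable pair if $o\succ_i\emptyset$ and $i\succ_o\emptyset$. A generalized random matching is an $n\times m$ matrix $p$ with $p(i,o)\ge0$, row sums $\le1$ and column sums $\le1$; it is deterministic if its entries are in $\{0,1\}$. A decomposition of $p$ is a representation $p=\sum_{j=1}^k\lambda_jP_j$ with $P_j$ generalized deterministic matchings, $\lambda_j\in(0,1]$, $\sum_j\lambda_j=1$. $p$ is non-wasteful if there is no acceptable pair $(i,o)$ with $\sum_{o':o'\succsim_i o}p(i,o')<1$ and $\sum_{j\in N}p(j,o)<1$. *)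

theory Defs
  imports Complex_Main
begin

text \<open>The null object / null agent is modelled by None (option type).\<close>

definition weak_order_on :: "'a set \<Rightarrow> ('a \<Rightarrow> 'a \<Rightarrow> bool) \<Rightarrow> bool" where
  "weak_order_on A R \<longleftrightarrow>
     (\<forall>x\<in>A. \<forall>y\<in>A. R x y \<or> R y x) \<and>
     (\<forall>x\<in>A. \<forall>y\<in>A. \<forall>z\<in>A. R x y \<longrightarrow> R y z \<longrightarrow> R x z)"

definition strict :: "('a \<Rightarrow> 'a \<Rightarrow> bool) \<Rightarrow> 'a \<Rightarrow> 'a \<Rightarrow> bool" where
  "strict R x y \<longleftrightarrow> R x y \<and> \<not> R y x"

definition general_instance ::
  "'i set \<Rightarrow> 'o set \<Rightarrow> ('i \<Rightarrow> 'o option \<Rightarrow> 'o option \<Rightarrow> bool) \<Rightarrow> ('o \<Rightarrow> 'i option \<Rightarrow> 'i option \<Rightarrow> bool) \<Rightarrow> bool" where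
  "general_instance N Obj Ra Ro \<longleftrightarrow>
     finite N \<and> finite Obj \<and>
     (\<forall>i\<in>N. weak_order_on (insert None (Some ` Obj)) (Ra i)) \<and>
     (\<forall>b\<in>Obj. weak_order_on (insert None (Some ` N)) (Ro b)) \<and>
     (\<forall>i\<in>N. \<forall>b\<in>Obj. \<not> (Ra i (Some b) None \<and> Ra i None (Some b))) \<and>
     (\<forall>b\<in>Obj. \<forall>i\<in>N. \<not> (Ro b (Some i) None \<and> Ro b None (Some i)))"

definition acceptable ::
  "('i \<Rightarrow> 'o option \<Rightarrow> 'o option \<Rightarrow> bool) \<Rightarrow> ('o \<Rightarrow> 'i option \<Rightarrow> 'i option \<Rightarrow> bool) \<Rightarrow> 'i \<Rightarrow> 'o \<Rightarrow> bool" where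
  "acceptable Ra Ro i b \<longleftrightarrow> strict (Ra i) (Some b) None \<and> strict (Ro b) (Some i) None"

text \<open>A generalized random matching: an N \<times> Obj matrix (only entries on N \<times> Obj matter).\<close>
definition gen_random_matching :: "'i set \<Rightarrow> 'o set \<Rightarrow> ('i \<Rightarrow> 'o \<Rightarrow> real) \<Rightarrow> bool" where
  "gen_random_matching N Obj p \<longleftrightarrow>
     (\<forall>i\<in>N. \<forall>b\<in>Obj. p i b \<ge> 0) \<and>
     (\<forall>i\<in>N. (\<Sum>b\<in>Obj. p i b) \<le> 1) \<and>
     (\<forall>b\<in>Obj. (\<Sum>i\<in>N. p i b) \<le> 1)"

definition gen_det_matching :: "'i set \<Rightarrow> 'o set \<Rightarrow> ('i \<Rightarrow> 'o \<Rightarrow> real) \<Rightarrow> bool" where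
  "gen_det_matching N Obj P \<longleftrightarrow>
     gen_random_matching N Obj P \<and> (\<forall>i\<in>N. \<forall>b\<in>Obj. P i b \<in> {0, 1})"

definition decomposition ::
  "'i set \<Rightarrow> 'o set \<Rightarrow> ('i \<Rightarrow> 'o \<Rightarrow> real) \<Rightarrow> nat \<Rightarrow> (nat \<Rightarrow> real) \<Rightarrow> (nat \<Rightarrow> 'i \<Rightarrow> 'o \<Rightarrow> real) \<Rightarrow> bool" where
  "decomposition N Obj p k lam P \<longleftrightarrow>
     (\<forall>j<k. gen_det_matching N Obj (P j)) \<and>
     (\<forall>j<k. 0 < lam j \<and> lam j \<le> 1) \<and>
     (\<Sum>j<k. lam j) = 1 \<and>
     (\<forall>i\<in>N. \<forall>b\<in>Obj. p i b = (\<Sum>j<k. lam j * P j i b))"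

definition non_wasteful ::
  "'i set \<Rightarrow> 'o set \<Rightarrow> ('i \<Rightarrow> 'o option \<Rightarrow> 'o option \<Rightarrow> bool) \<Rightarrow> ('o \<Rightarrow> 'i option \<Rightarrow> 'i option \<Rightarrow> bool)
     \<Rightarrow> ('i \<Rightarrow> 'o \<Rightarrow> real) \<Rightarrow> bool" where
  "non_wasteful N Obj Ra Ro p \<longleftrightarrow>
     \<not> (\<exists>i\<in>N. \<exists>b\<in>Obj. acceptable Ra Ro i b \<and>
          (\<Sum>b'\<in>{b'\<in>Obj. Ra i (Some b') (Some b)}. p i b') < 1 \<and>
          (\<Sum>j\<in>N. p j b) < 1)"

end

theory Submission
  imports Defs
begin

(* A deterministic matching with total weight below 1 on a row segment or a column must
   vanish there. The same segment of p = sum_l lam_l P_l then misses at least the weight lam_j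
   of that matching, because every other P_l contributes at most 1; so a waste witness for P_j
   is also one for p. *)

lemma sum_01_less_one_imp_zero:
  fixes f :: "'a \<Rightarrow> real"
  assumes "finite S" "\<forall>x\<in>S. f x \<in> {0, 1}" "sum f S < 1"
  shows "sum f S = 0"
proof -
  have "f x = 0" if x: "x \<in> S" for x
  proof (rule ccontr)
    assume "f x \<noteq> 0"
    with assms(2) x have "f x = 1" by auto
    moreover have "f x \<le> sum f S"
      using assms x by (intro member_le_sum) auto
    ultimately show False using assms(3) by simp
  qed
  then show ?thesis by simp
qed

lemma convex_combination_less_one:
  fixes lam Q :: "nat \<Rightarrow> real"
  assumes "\<forall>l<k. 0 \<le> lam l" "(\<Sum>l<k. lam l) = 1" "j < k" "0 < lam j"
    and "\<forall>l<k. Q l \<le> 1" "Q j = 0"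
  shows "(\<Sum>l<k. lam l * Q l) < 1"
proof -
  have "(\<Sum>l<k. lam l * Q l) \<le> (\<Sum>l<k. lam l - (if l = j then lam l else 0))"
    using assms by (intro sum_mono) (auto intro: mult_left_le)
  also have "\<dots> = 1 - lam j"
    using assms(2,3) by (simp add: sum_subtractf)
  finally show ?thesis using assms(4) by linarith
qed

lemma mixture_sum_less_one:
  fixes lam :: "nat \<Rightarrow> real" and q :: "nat \<Rightarrow> 'a \<Rightarrow> real" and f :: "'a \<Rightarrow> real"
  assumes "\<forall>l<k. 0 \<le> lam l" "(\<Sum>l<k. lam l) = 1" "j < k" "0 < lam j"
    and "finite S" "\<forall>x\<in>S. f x = (\<Sum>l<k. lam l * q l x)"
    and "\<forall>l<k. sum (q l) S \<le> 1"
    and "\<forall>x\<in>S. q j x \<in> {0, 1}" "sum (q j) S < 1"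
  shows "sum f S < 1"
proof -
  have "sum f S = (\<Sum>l<k. lam l * sum (q l) S)"
    using assms(6) by (simp add: sum.swap [of _ S] sum_distrib_left)
  also have "\<dots> < 1"
    using assms sum_01_less_one_imp_zero[OF assms(5,8,9)]
    by (intro convex_combination_less_one) auto
  finally show ?thesis .
qed

lemma gen_random_matching_row_subset_le_one:
  assumes "gen_random_matching N Obj p" "finite Obj" "i \<in> N" "S \<subseteq> Obj"
  shows "(\<Sum>b\<in>S. p i b) \<le> 1"
proof -
  have "(\<Sum>b\<in>S. p i b) \<le> (\<Sum>b\<in>Obj. p i b)"
    using assms unfolding gen_random_matching_def by (intro sum_mono2) auto
  also have "\<dots> \<le> 1"
    using assms unfolding gen_random_matching_def by auto
  finally show ?thesis .
qed

theorem lemma6: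
  fixes N :: "'i set" and Obj :: "'o set"
    and Ra :: "'i \<Rightarrow> 'o option \<Rightarrow> 'o option \<Rightarrow> bool"
    and Ro :: "'o \<Rightarrow> 'i option \<Rightarrow> 'i option \<Rightarrow> bool"
    and p :: "'i \<Rightarrow> 'o \<Rightarrow> real"
    and k :: nat and lam :: "nat \<Rightarrow> real" and P :: "nat \<Rightarrow> 'i \<Rightarrow> 'o \<Rightarrow> real"
  assumes "general_instance N Obj Ra Ro"
    and "gen_random_matching N Obj p"
    and "non_wasteful N Obj Ra Ro p"
    and "decomposition N Obj p k lam P"
  shows "\<forall>j<k. non_wasteful N Obj Ra Ro (P j)"
proof (intro allI impI)
  fix j assume j: "j < k"
  have fin: "finite N" "finite Obj"
    using assms(1) unfolding general_instance_def by auto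
  have det: "\<forall>l<k. gen_det_matching N Obj (P l)"
    and lam: "\<forall>l<k. 0 < lam l" "(\<Sum>l<k. lam l) = 1"
    and p_eq: "\<forall>i\<in>N. \<forall>b\<in>Obj. p i b = (\<Sum>l<k. lam l * P l i b)"
    using assms(4) unfolding decomposition_def by auto
  have random: "\<forall>l<k. gen_random_matching N Obj (P l)"
    and P_j: "\<forall>i\<in>N. \<forall>b\<in>Obj. P j i b \<in> {0, 1}"
    using det j unfolding gen_det_matching_def by auto
  have weights: "\<forall>l<k. 0 \<le> lam l" "0 < lam j"
    using lam(1) j by (auto simp: less_imp_le)
  note mixture = mixture_sum_less_one[OF weights(1) lam(2) j weights(2)]
  show "non_wasteful N Obj Ra Ro (P j)"
    unfolding non_wasteful_def
  proof clarify
    fix i b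
    let ?S = "{b'\<in>Obj. Ra i (Some b') (Some b)}"
    assume i: "i \<in> N" and b: "b \<in> Obj" and acc: "acceptable Ra Ro i b"
      and row: "(\<Sum>b'\<in>?S. P j i b') < 1" and col: "(\<Sum>i'\<in>N. P j i' b) < 1"
    have "(\<Sum>b'\<in>?S. p i b') < 1"
      using fin i p_eq P_j random gen_random_matching_row_subset_le_one[OF _ fin(2) i]
      by (intro mixture[where q = "\<lambda>l. P l i", OF _ _ _ _ row]) auto
    moreover have "(\<Sum>i'\<in>N. p i' b) < 1"
      using fin b p_eq P_j random unfolding gen_random_matching_def
      by (intro mixture[where q = "\<lambda>l i'. P l i' b", OF _ _ _ _ col]) auto
    ultimately show False
      using assms(3) i b acc unfolding non_wasteful_def by blast
  qed
qed

end
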